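(* Let $M_1 \in \mathbb{Z}^{m\times m}$ be nonsingular, $M_2 \in \mathbb{Z}^{\ell_2 \times m}$, $F \in \mathbb{Z}^{n\times m}$, and let $(S,W)$ be a Smith massager for $M_1$. Then $$\mathcal{R}\left(\begin{bmatrix} M_1 \\ M_2 \end{bmatrix}, F\right) = \mathcal{R}\left(\begin{bmatrix} S \\ \mathrm{colmod}(M_2W,S)\end{bmatrix}, \mathrm{colmod}(FW,S)\right).$$
   Context: For an integer matrix $A$, $\mathcal{L}(A)$ denotes the lattice of all $\mathbb{Z}$-linear combinations of the rows of $A$. For $M \in \mathbb{Z}^{\ell \times m}$ of full column rank and $F \in \mathbb{Z}^{n \times m}$, the integer relations lattice is $\mathcal{R}(M,F) := \{p \in \mathbb{Z}^{1\times n} : pF \in \mathcal{L}(M)\}$. For a diagonal $S \in \mathbb{Z}_{\ge 0}^{m\times m}$ with positive diagonal and $A$ with $m$ columns, $\mathrm{colmod}(A,S)$ is the matrix obtained from $A$ by replacing each entry in column $j$ by its residue in $\{0,\dots,S_{jj}-1\}$ modulo $S_{jj}$. "$A \equiv B \bmod S$" means every row of $A-B$ lies in $\mathcal{L}(S)$. A Smith form is a diagonal matrix $\mathrm{diag}(s_1,\dots,s_m)$ with nonnegative integer entries and $s_i \mid s_{i+1}$; the Smith form of a nonsingular $M$ is the unique such matrix $UMV$ with $U,V$ unimodular. If $M \in \mathbb{Z}^{m\times m}$ is nonsingular with Smith form $S$, a pair $(S,W)$ with $W \in \mathbb{Z}^{m\times m}$ is a Smith massager for $M$ if (i) $MW \equiv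 0 \bmod S$ and (ii) there exists $Z \in \mathbb{Z}^{m\times m}$ with $ZW \equiv I_m \bmod S$. *)

theory Defs
  imports "Jordan_Normal_Form.Determinant"
begin

text \<open>A row vector p in Z^(1 x n) is an int vec of dimension n;
 the product pF is (transpose_mat F) *v p.\<close>

definition row_lattice :: "int mat \<Rightarrow> int vec set" where
  "row_lattice A = {v. \<exists>c :: int vec. dim_vec c = dim_row A \<and> v = transpose_mat A *\<^sub>v c}"

definition relations_lattice :: "int mat \<Rightarrow> int mat \<Rightarrow> int vec set" where
  "relations_lattice M F = {p. dim_vec p = dim_row F \<and> transpose_mat F *\<^sub>v p \<in> row_lattice M}"

definition stack_mat :: "int mat \<Rightarrow> int mat \<Rightarrow> int mat" where
  "stack_mat A B = mat (dim_row A + dim_row B) (dim_col A)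
     (\<lambda>(i,j). if i < dim_row A then A $$ (i,j) else B $$ (i - dim_row A, j))"

definition colmod :: "int mat \<Rightarrow> int mat \<Rightarrow> int mat" where
  "colmod A S = mat (dim_row A) (dim_col A) (\<lambda>(i,j). A $$ (i,j) mod S $$ (j,j))"

definition cong_mod_mat :: "int mat \<Rightarrow> int mat \<Rightarrow> int mat \<Rightarrow> bool" where
  "cong_mod_mat A B S = (\<forall>i < dim_row A. row (A - B) i \<in> row_lattice S)"

definition smith_form :: "int mat \<Rightarrow> bool" where
  "smith_form S = (square_mat S \<and> diagonal_mat S \<and>
     (\<forall>i < dim_row S. S $$ (i,i) \<ge> 0) \<and>
     (\<forall>i. i + 1 < dim_row S \<longrightarrow> S $$ (i,i) dvd S $$ (i+1,i+1)))"

definition unimodular :: "nat \<Rightarrow> int mat \<Rightarrow> bool" where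
  "unimodular m U = (U \<in> carrier_mat m m \<and> (det U = 1 \<or> det U = -1))"

definition is_smith_form_of :: "int mat \<Rightarrow> int mat \<Rightarrow> bool" where
  "is_smith_form_of S M = (\<exists>m. M \<in> carrier_mat m m \<and> S \<in> carrier_mat m m \<and> smith_form S \<and>
     (\<exists>U V. unimodular m U \<and> unimodular m V \<and> S = U * M * V))"

definition smith_massager :: "int mat \<Rightarrow> int mat \<Rightarrow> int mat \<Rightarrow> bool" where
  "smith_massager M S W = (\<exists>m. M \<in> carrier_mat m m \<and> det M \<noteq> 0 \<and>
     is_smith_form_of S M \<and> W \<in> carrier_mat m m \<and>
     cong_mod_mat (M * W) (0\<^sub>m m m) S \<and>
     (\<exists>Z \<in> carrier_mat m m. cong_mod_mat (Z * W) (1\<^sub>m m) S))"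

end

theory Submission
  imports Defs
begin

(*
  Write s_j for the diagonal entries of S; they are positive because M1 is nonsingular, and
  L(S) consists of the vectors v with s_j dividing v_j for all j.  The massager detects L(M1):
  v lies in L(M1) iff vW lies in L(S).  If v = cM1 then vW = c(M1 W) lies in L(S).  Conversely,
  let S = U M1 V and T = V^-1 W.  Then ST = U M1 W and (ZV)T = ZW, so y |-> yT is a well-defined
  self-map of the finite group Z^m / L(S) with a right inverse, hence injective; as (vV)T = vW
  lies in L(S), so does vV, and therefore v = (vV)V^-1 lies in L(M1).
  Consequently p lies in R([M1; M2], F) iff pF - bM2 lies in L(M1) for some b, iff
  p(FW) - b(M2 W) lies in L(S), and replacing FW and M2 W by their column-wise residues modulo S
  changes neither side of this condition.
*)

definition mult_vec_mat :: "'a :: semiring_0 vec \<Rightarrow> 'a mat \<Rightarrow> 'a vec" (infixl "\<^sub>v*" 70) where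
  "v \<^sub>v* A = transpose_mat A *\<^sub>v v"

lemma dim_mult_vec_mat [simp]: "dim_vec (v \<^sub>v* A) = dim_col A"
  by (simp add: mult_vec_mat_def)

lemma index_mult_vec_mat:
  fixes A :: "'a :: comm_semiring_0 mat"
  shows "dim_vec v = dim_row A \<Longrightarrow> j < dim_col A \<Longrightarrow>
    (v \<^sub>v* A) $ j = (\<Sum>i<dim_row A. v $ i * A $$ (i, j))"
  by (auto simp: mult_vec_mat_def mult_mat_vec_def scalar_prod_def atLeast0LessThan mult.commute
      intro!: sum.cong)

lemma mult_vec_mat_assoc:
  fixes A :: "'a :: comm_semiring_0 mat"
  shows "A \<in> carrier_mat k l \<Longrightarrow> B \<in> carrier_mat l r \<Longrightarrow> dim_vec v = k \<Longrightarrow>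
    v \<^sub>v* (A * B) = (v \<^sub>v* A) \<^sub>v* B"
  by (auto simp: mult_vec_mat_def transpose_mult intro!: assoc_mult_mat_vec)

lemma mult_vec_mat_one [simp]:
  fixes v :: "'a :: semiring_1 vec"
  assumes "dim_vec v = m"
  shows "v \<^sub>v* 1\<^sub>m m = v"
  using one_mult_mat_vec[OF carrier_vecI[OF assms]] by (simp add: mult_vec_mat_def)

lemma minus_mult_vec_mat:
  fixes A :: "'a :: ring mat"
  assumes A: "A \<in> carrier_mat k m" and x: "dim_vec x = k" and y: "dim_vec y = k"
  shows "(x - y) \<^sub>v* A = x \<^sub>v* A - y \<^sub>v* A"
  using mult_minus_distrib_mat_vec[OF _ carrier_vecI[OF x] carrier_vecI[OF y], of "transpose_mat A" m]
    A by (simp add: mult_vec_mat_def)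

lemma mult_vec_mat_minus:
  fixes A :: "'a :: ring mat"
  assumes A: "A \<in> carrier_mat k m" and B: "B \<in> carrier_mat k m" and v: "dim_vec v = k"
  shows "v \<^sub>v* (A - B) = v \<^sub>v* A - v \<^sub>v* B"
  using minus_mult_distrib_mat_vec[OF _ _ carrier_vecI[OF v], of "transpose_mat A" m "transpose_mat B"]
    A B by (simp add: mult_vec_mat_def transpose_minus)

lemma row_mult_eq_mult_vec_mat:
  fixes A :: "'a :: comm_semiring_0 mat"
  shows "A \<in> carrier_mat k l \<Longrightarrow> B \<in> carrier_mat l r \<Longrightarrow> i < k \<Longrightarrow> row (A * B) i = row A i \<^sub>v* B"
  by (intro eq_vecI) (auto simp: mult_vec_mat_def comm_scalar_prod[of _ l])

lemma row_lattice_iff: "v \<in> row_lattice A \<longleftrightarrow> (\<exists>c. dim_vec c = dim_row A \<and> v = c \<^sub>v* A)"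
  unfolding row_lattice_def mult_vec_mat_def by simp

lemma row_lattice_diagonal_iff:
  assumes S: "S \<in> carrier_mat m m" and D: "diagonal_mat S"
  shows "v \<in> row_lattice S \<longleftrightarrow> dim_vec v = m \<and> (\<forall>j<m. S $$ (j, j) dvd v $ j)"
proof -
  have diag: "(c \<^sub>v* S) $ j = c $ j * S $$ (j, j)" if "dim_vec c = m" "j < m" for c j
  proof -
    have "(c \<^sub>v* S) $ j = (\<Sum>i<m. c $ i * S $$ (i, j))"
      using S that by (simp add: index_mult_vec_mat)
    also have "\<dots> = (\<Sum>i<m. if i = j then c $ j * S $$ (j, j) else 0)"
      using S D that unfolding diagonal_mat_def by (intro sum.cong) auto
    finally show ?thesis using that by simp
  qed
  show ?thesis
  proof
    assume "v \<in> row_lattice S"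
    then show "dim_vec v = m \<and> (\<forall>j<m. S $$ (j, j) dvd v $ j)"
      using S diag unfolding row_lattice_iff by auto
  next
    assume v: "dim_vec v = m \<and> (\<forall>j<m. S $$ (j, j) dvd v $ j)"
    define c where "c = vec m (\<lambda>j. v $ j div S $$ (j, j))"
    have "v = c \<^sub>v* S" using v S by (intro eq_vecI) (auto simp: diag c_def)
    moreover have "dim_vec c = m" by (simp add: c_def)
    ultimately show "v \<in> row_lattice S" unfolding row_lattice_iff using S by auto
  qed
qed

lemma cong_mod_mat_diagonal_iff:
  assumes "S \<in> carrier_mat m m" and "diagonal_mat S"
    and "A \<in> carrier_mat k m" and "B \<in> carrier_mat k m"
  shows "cong_mod_mat A B S \<longleftrightarrow> (\<forall>i<k. \<forall>j<m. S $$ (j, j) dvd A $$ (i, j) - B $$ (i, j))"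
  using assms unfolding cong_mod_mat_def row_lattice_diagonal_iff[OF assms(1,2)] by auto

lemma cong_mod_mat_zero_iff:
  "X \<in> carrier_mat k m \<Longrightarrow> cong_mod_mat X (0\<^sub>m k m) S \<longleftrightarrow> (\<forall>i<k. row X i \<in> row_lattice S)"
proof -
  assume X: "X \<in> carrier_mat k m"
  then have "X - 0\<^sub>m k m = X" by (intro eq_matI) auto
  then show ?thesis unfolding cong_mod_mat_def using X by simp
qed

lemma mult_vec_mat_mem_row_lattice:
  assumes S: "S \<in> carrier_mat m m" "diagonal_mat S" and X: "X \<in> carrier_mat k m"
    and rows: "\<forall>i<k. row X i \<in> row_lattice S" and v: "dim_vec v = k"
  shows "v \<^sub>v* X \<in> row_lattice S"
proof -
  have "S $$ (j, j) dvd (v \<^sub>v* X) $ j" if j: "j < m" for j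
  proof -
    have "S $$ (j, j) dvd X $$ (i, j)" if "i < k" for i
      using rows that j X unfolding row_lattice_diagonal_iff[OF S] by auto
    then show ?thesis using v X j by (auto simp: index_mult_vec_mat intro!: dvd_sum dvd_mult)
  qed
  then show ?thesis unfolding row_lattice_diagonal_iff[OF S] using X by auto
qed

lemma mult_vec_mat_cong_mod_mat:
  assumes S: "S \<in> carrier_mat m m" "diagonal_mat S"
    and X: "X \<in> carrier_mat k m" and Y: "Y \<in> carrier_mat k m"
    and XY: "cong_mod_mat X Y S" and v: "dim_vec v = k"
  shows "v \<^sub>v* X - v \<^sub>v* Y \<in> row_lattice S"
proof -
  have "v \<^sub>v* X - v \<^sub>v* Y = v \<^sub>v* (X - Y)" using X Y v by (simp add: mult_vec_mat_minus)
  also have "\<dots> \<in> row_lattice S"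
    using S X Y XY v unfolding cong_mod_mat_def by (intro mult_vec_mat_mem_row_lattice) auto
  finally show ?thesis .
qed

lemma mult_vec_mat_mem_row_lattice_of_mem:
  assumes S: "S \<in> carrier_mat m m" "diagonal_mat S"
    and B: "B \<in> carrier_mat k l" and T: "T \<in> carrier_mat l m"
    and BT: "cong_mod_mat (B * T) (0\<^sub>m k m) S" and v: "v \<in> row_lattice B"
  shows "v \<^sub>v* T \<in> row_lattice S"
proof -
  obtain c where c: "dim_vec c = k" "v = c \<^sub>v* B" using v B unfolding row_lattice_iff by auto
  then have "v \<^sub>v* T = c \<^sub>v* (B * T)" using mult_vec_mat_assoc[OF B T c(1)] by simp
  also have "\<dots> \<in> row_lattice S"
    using S B T BT c(1) cong_mod_mat_zero_iff[of "B * T" k m S]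
    by (intro mult_vec_mat_mem_row_lattice) auto
  finally show ?thesis .
qed

lemma cong_mod_mat_zero_mult_left:
  assumes S: "S \<in> carrier_mat m m" "diagonal_mat S"
    and U: "U \<in> carrier_mat r k" and X: "X \<in> carrier_mat k m"
    and "cong_mod_mat X (0\<^sub>m k m) S"
  shows "cong_mod_mat (U * X) (0\<^sub>m r m) S"
proof -
  have rows: "\<forall>i<k. row X i \<in> row_lattice S" using assms cong_mod_mat_zero_iff[OF X] by simp
  have "row (U * X) i \<in> row_lattice S" if "i < r" for i
    unfolding row_mult_eq_mult_vec_mat[OF U X that]
    using U that by (intro mult_vec_mat_mem_row_lattice[OF S X rows]) auto
  then show ?thesis using U X by (simp add: cong_mod_mat_zero_iff)
qed

lemma diff_mem_row_lattice_cong: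
  assumes S: "S \<in> carrier_mat m m" "diagonal_mat S"
    and x: "x - x' \<in> row_lattice S" and y: "y - y' \<in> row_lattice S"
    and dims: "dim_vec x = m" "dim_vec x' = m" "dim_vec y = m" "dim_vec y' = m"
  shows "x - y \<in> row_lattice S \<longleftrightarrow> x' - y' \<in> row_lattice S"
proof -
  have "S $$ (j, j) dvd x $ j - y $ j \<longleftrightarrow> S $$ (j, j) dvd x' $ j - y' $ j" if j: "j < m" for j
  proof -
    have "S $$ (j, j) dvd (x $ j - x' $ j) - (y $ j - y' $ j)"
      using x y dims j unfolding row_lattice_diagonal_iff[OF S] by (auto intro: dvd_diff)
    moreover have "x $ j - y $ j = (x' $ j - y' $ j) + ((x $ j - x' $ j) - (y $ j - y' $ j))"
      by simp
    ultimately show ?thesis by (metis dvd_add_left_iff)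
  qed
  then show ?thesis unfolding row_lattice_diagonal_iff[OF S] using dims by auto
qed

lemma colmod_carrier_mat [simp]: "A \<in> carrier_mat k m \<Longrightarrow> colmod A S \<in> carrier_mat k m"
  by (simp add: colmod_def)

lemma colmod_cong_mod_mat:
  assumes S: "S \<in> carrier_mat m m" "diagonal_mat S" and A: "A \<in> carrier_mat k m"
  shows "cong_mod_mat (colmod A S) A S"
  using cong_mod_mat_diagonal_iff[OF S colmod_carrier_mat[OF A] A] A
  by (auto simp: colmod_def mod_eq_dvd_iff[symmetric])

lemma mult_vec_mat_stack_mat:
  assumes A: "A \<in> carrier_mat ka m" and B: "B \<in> carrier_mat kb m" and c: "dim_vec c = ka + kb"
  shows "c \<^sub>v* stack_mat A B = vec ka (\<lambda>i. c $ i) \<^sub>v* A + vec kb (\<lambda>i. c $ (ka + i)) \<^sub>v* B"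
proof (rule eq_vecI)
  have split: "(\<Sum>i<ka + kb. g i) = (\<Sum>i<ka. g i) + (\<Sum>i<kb. g (ka + i))" for g :: "nat \<Rightarrow> int"
    by (induction kb) (simp_all add: add.assoc)
  have AB: "stack_mat A B \<in> carrier_mat (ka + kb) m" using A B by (simp add: stack_mat_def)
  fix j assume "j < dim_vec (vec ka (\<lambda>i. c $ i) \<^sub>v* A + vec kb (\<lambda>i. c $ (ka + i)) \<^sub>v* B)"
  then have j: "j < m" using B by simp
  show "(c \<^sub>v* stack_mat A B) $ j = (vec ka (\<lambda>i. c $ i) \<^sub>v* A + vec kb (\<lambda>i. c $ (ka + i)) \<^sub>v* B) $ j"
    using A B AB c j by (simp add: index_mult_vec_mat split stack_mat_def)
qed (use A B in \<open>simp add: stack_mat_def\<close>)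

lemma row_lattice_stack_mat:
  assumes A: "A \<in> carrier_mat ka m" and B: "B \<in> carrier_mat kb m"
  shows "x \<in> row_lattice (stack_mat A B) \<longleftrightarrow>
    (\<exists>a b. dim_vec a = ka \<and> dim_vec b = kb \<and> x = a \<^sub>v* A + b \<^sub>v* B)"
proof
  assume "x \<in> row_lattice (stack_mat A B)"
  then obtain c where c: "dim_vec c = ka + kb" "x = c \<^sub>v* stack_mat A B"
    unfolding row_lattice_iff using A B by (auto simp: stack_mat_def)
  show "\<exists>a b. dim_vec a = ka \<and> dim_vec b = kb \<and> x = a \<^sub>v* A + b \<^sub>v* B"
    using mult_vec_mat_stack_mat[OF A B c(1)] c(2)
    by (intro exI[of _ "vec ka (\<lambda>i. c $ i)"] exI[of _ "vec kb (\<lambda>i. c $ (ka + i))"]) simp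
next
  assume "\<exists>a b. dim_vec a = ka \<and> dim_vec b = kb \<and> x = a \<^sub>v* A + b \<^sub>v* B"
  then obtain a b where ab: "dim_vec a = ka" "dim_vec b = kb" "x = a \<^sub>v* A + b \<^sub>v* B" by blast
  define c where "c = vec (ka + kb) (\<lambda>i. if i < ka then a $ i else b $ (i - ka))"
  have "vec ka (\<lambda>i. c $ i) = a" "vec kb (\<lambda>i. c $ (ka + i)) = b"
    using ab by (auto simp: c_def vec_eq_iff)
  then have "x = c \<^sub>v* stack_mat A B" using mult_vec_mat_stack_mat[OF A B, of c] ab by (simp add: c_def)
  moreover have "dim_vec c = dim_row (stack_mat A B)" using A B by (simp add: c_def stack_mat_def)
  ultimately show "x \<in> row_lattice (stack_mat A B)" unfolding row_lattice_iff by blast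
qed

lemma relations_lattice_stack_mat_iff:
  assumes A: "A \<in> carrier_mat ka m" and B: "B \<in> carrier_mat kb m" and F: "F \<in> carrier_mat n m"
  shows "p \<in> relations_lattice (stack_mat A B) F \<longleftrightarrow>
    dim_vec p = n \<and> (\<exists>b. dim_vec b = kb \<and> p \<^sub>v* F - b \<^sub>v* B \<in> row_lattice A)"
proof -
  have "x \<in> row_lattice (stack_mat A B) \<longleftrightarrow> (\<exists>b. dim_vec b = kb \<and> x - b \<^sub>v* B \<in> row_lattice A)"
    if x: "dim_vec x = m" for x
  proof -
    have "x = a \<^sub>v* A + b \<^sub>v* B \<longleftrightarrow> x - b \<^sub>v* B = a \<^sub>v* A" for a b
      using x A B by (auto simp: vec_eq_iff)
    then show ?thesis unfolding row_lattice_stack_mat[OF A B] using A by (auto simp: row_lattice_iff[of _ A])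
  qed
  then show ?thesis unfolding relations_lattice_def mult_vec_mat_def[symmetric] using F by auto
qed

definition vec_mod :: "int vec \<Rightarrow> int mat \<Rightarrow> int vec" where
  "vec_mod y S = vec (dim_vec y) (\<lambda>j. y $ j mod S $$ (j, j))"

lemma dim_vec_mod [simp]: "dim_vec (vec_mod y S) = dim_vec y"
  by (simp add: vec_mod_def)

lemma vec_mod_vec_mod [simp]: "vec_mod (vec_mod y S) S = vec_mod y S"
  by (intro eq_vecI) (simp_all add: vec_mod_def)

lemma vec_mod_eq_iff:
  assumes "S \<in> carrier_mat m m" "diagonal_mat S" and "dim_vec y = m" "dim_vec z = m"
  shows "vec_mod y S = vec_mod z S \<longleftrightarrow> y - z \<in> row_lattice S"
  using assms unfolding row_lattice_diagonal_iff[OF assms(1,2)]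
  by (auto simp: vec_mod_def vec_eq_iff mod_eq_dvd_iff)

lemma vec_mod_eq_zero_iff:
  assumes "S \<in> carrier_mat m m" "diagonal_mat S" and "dim_vec y = m"
  shows "vec_mod y S = 0\<^sub>v m \<longleftrightarrow> y \<in> row_lattice S"
  using assms unfolding row_lattice_diagonal_iff[OF assms(1,2)]
  by (auto simp: vec_mod_def vec_eq_iff dvd_eq_mod_eq_0)

lemma finite_vec_mod_image:
  assumes pos: "\<forall>j<m. S $$ (j, j) > 0"
  shows "finite ((\<lambda>y. vec_mod y S) ` carrier_vec m)"
proof (rule finite_subset)
  show "(\<lambda>y. vec_mod y S) ` carrier_vec m \<subseteq> (\<lambda>h. vec m h) ` (PiE {..<m} (\<lambda>j. {0..<S $$ (j, j)}))"
  proof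
    fix y assume "y \<in> (\<lambda>y. vec_mod y S) ` carrier_vec m"
    then obtain z where "z \<in> carrier_vec m" and y: "y = vec_mod z S" by blast
    then have z: "dim_vec z = m" by simp
    have "y = vec m (restrict (\<lambda>j. y $ j) {..<m})" using z y by (auto simp: vec_eq_iff)
    moreover have "restrict (\<lambda>j. y $ j) {..<m} \<in> PiE {..<m} (\<lambda>j. {0..<S $$ (j, j)})"
      using pos z y by (auto simp: vec_mod_def)
    ultimately show "y \<in> (\<lambda>h. vec m h) ` (PiE {..<m} (\<lambda>j. {0..<S $$ (j, j)}))" by blast
  qed
qed (auto intro: finite_PiE)

lemma row_lattice_cancel_right:
  fixes S T A :: "int mat"
  assumes S: "S \<in> carrier_mat m m" "diagonal_mat S" and pos: "\<forall>j<m. S $$ (j, j) > 0"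
    and T: "T \<in> carrier_mat m m" and A: "A \<in> carrier_mat m m"
    and ST: "cong_mod_mat (S * T) (0\<^sub>m m m) S"
    and AT: "cong_mod_mat (A * T) (1\<^sub>m m) S"
    and x: "dim_vec x = m" and xT: "x \<^sub>v* T \<in> row_lattice S"
  shows "x \<in> row_lattice S"
proof -
  define G where "G = (\<lambda>y. vec_mod y S) ` carrier_vec m"
  define f where "f y = vec_mod (y \<^sub>v* T) S" for y
  have vec_mod_zero: "vec_mod (0\<^sub>v m) S = 0\<^sub>v m" by (intro eq_vecI) (simp_all add: vec_mod_def)
  have f_vec_mod: "f (vec_mod y S) = f y" if y: "dim_vec y = m" for y
  proof -
    have "vec_mod y S - y \<in> row_lattice S" using vec_mod_eq_iff[OF S, of "vec_mod y S" y] y by simp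
    then have "(vec_mod y S - y) \<^sub>v* T \<in> row_lattice S"
      by (rule mult_vec_mat_mem_row_lattice_of_mem[OF S S(1) T ST])
    then show ?thesis
      unfolding f_def using y T vec_mod_eq_iff[OF S, of "vec_mod y S \<^sub>v* T" "y \<^sub>v* T"]
      by (simp add: minus_mult_vec_mat)
  qed
  have "G \<subseteq> f ` G"
  proof
    fix g assume "g \<in> G"
    then obtain y where "y \<in> carrier_vec m" and g: "g = vec_mod y S" unfolding G_def by blast
    then have y: "dim_vec y = m" by simp
    have "g \<^sub>v* (A * T) - g \<^sub>v* 1\<^sub>m m \<in> row_lattice S"
      using mult_vec_mat_cong_mod_mat[OF S mult_carrier_mat[OF A T] one_carrier_mat AT] g y by simp
    moreover have "(g \<^sub>v* A) \<^sub>v* T = g \<^sub>v* (A * T)" using mult_vec_mat_assoc[OF A T] g y by simp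
    ultimately have "f (g \<^sub>v* A) = g"
      unfolding f_def using vec_mod_eq_iff[OF S, of "g \<^sub>v* (A * T)" g] A T g y by simp
    then have "f (vec_mod (g \<^sub>v* A) S) = g" using f_vec_mod A by simp
    moreover have "vec_mod (g \<^sub>v* A) S \<in> G"
      unfolding G_def using A by (intro image_eqI[OF refl] carrier_vecI) simp
    ultimately show "g \<in> f ` G" by (rule image_eqI[OF sym])
  qed
  then have "inj_on f G"
    using finite_vec_mod_image[OF pos] unfolding G_def by (intro finite_surj_inj)
  moreover have "vec_mod x S \<in> G" unfolding G_def using x by (intro image_eqI[OF refl] carrier_vecI)
  moreover have "0\<^sub>v m \<in> G" using vec_mod_zero unfolding G_def by (metis image_eqI zero_carrier_vec)
  moreover have "f (vec_mod x S) = f (0\<^sub>v m)"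
  proof -
    have zero_T: "0\<^sub>v m \<^sub>v* T = 0\<^sub>v m" using T by (intro eq_vecI) (auto simp: mult_vec_mat_def)
    have "f (vec_mod x S) = vec_mod (x \<^sub>v* T) S" using f_vec_mod[OF x] unfolding f_def .
    also have "\<dots> = 0\<^sub>v m" using vec_mod_eq_zero_iff[OF S, of "x \<^sub>v* T"] xT T by simp
    also have "\<dots> = f (0\<^sub>v m)" unfolding f_def using zero_T vec_mod_zero by simp
    finally show ?thesis .
  qed
  ultimately have "vec_mod x S = 0\<^sub>v m" by (meson inj_onD)
  then show ?thesis using vec_mod_eq_zero_iff[OF S x] by simp
qed

lemma unimodular_right_inverse:
  assumes "unimodular m U"
  obtains Ui where "Ui \<in> carrier_mat m m" "U * Ui = 1\<^sub>m m"
proof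
  have U: "U \<in> carrier_mat m m" and det: "det U = 1 \<or> det U = -1"
    using assms unfolding unimodular_def by auto
  show "det U \<cdot>\<^sub>m adj_mat U \<in> carrier_mat m m" using adj_mat(1)[OF U] by simp
  have "U * (det U \<cdot>\<^sub>m adj_mat U) = det U \<cdot>\<^sub>m (det U \<cdot>\<^sub>m 1\<^sub>m m)"
    using mult_smult_distrib[OF U adj_mat(1)[OF U]] adj_mat(2)[OF U] by simp
  also have "\<dots> = 1\<^sub>m m" using det by (intro eq_matI) auto
  finally show "U * (det U \<cdot>\<^sub>m adj_mat U) = 1\<^sub>m m" .
qed

lemma smith_form_of_nonsingular:
  assumes SM: "is_smith_form_of S M" and M: "M \<in> carrier_mat m m" and det: "det M \<noteq> 0"
  shows "S \<in> carrier_mat m m" and "diagonal_mat S" and "\<forall>j<m. S $$ (j, j) > 0"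
proof -
  obtain U V where S: "S \<in> carrier_mat m m" and sf: "smith_form S"
    and U: "unimodular m U" and V: "unimodular m V" and SUMV: "S = U * M * V"
    using SM M unfolding is_smith_form_of_def by auto
  have Uc: "U \<in> carrier_mat m m" and Vc: "V \<in> carrier_mat m m"
    using U V unfolding unimodular_def by auto
  show "S \<in> carrier_mat m m" by (fact S)
  show D: "diagonal_mat S" using sf unfolding smith_form_def by simp
  have "det S = det U * det M * det V"
    unfolding SUMV det_mult[OF mult_carrier_mat[OF Uc M] Vc] det_mult[OF Uc M] ..
  moreover have "det U \<noteq> 0" "det V \<noteq> 0" using U V unfolding unimodular_def by auto
  ultimately have "det S \<noteq> 0" using det by simp
  moreover have "det S = prod_list (diag_mat S)"
    using D S by (intro det_upper_triangular) (auto simp: diagonal_mat_def upper_triangular_def)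
  ultimately have "S $$ (j, j) \<noteq> 0" if "j < m" for j
    using S that by (auto simp: diag_mat_def prod_list_zero_iff)
  moreover have "S $$ (j, j) \<ge> 0" if "j < m" for j
    using sf S that unfolding smith_form_def by auto
  ultimately show "\<forall>j<m. S $$ (j, j) > 0" by (simp add: order.strict_iff_order)
qed

lemma mem_row_lattice_of_mult_right_invertible:
  fixes M :: "int mat"
  assumes M: "M \<in> carrier_mat m m" and U: "U \<in> carrier_mat m m"
    and V: "V \<in> carrier_mat m m" and Vi: "Vi \<in> carrier_mat m m" and VVi: "V * Vi = 1\<^sub>m m"
    and v: "dim_vec v = m" and vV: "v \<^sub>v* V \<in> row_lattice (U * M * V)"
  shows "v \<in> row_lattice M"
proof -
  have UM: "U * M \<in> carrier_mat m m" using U M by simp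
  obtain c where c: "dim_vec c = m" "v \<^sub>v* V = c \<^sub>v* (U * M * V)"
    using vV U unfolding row_lattice_iff by auto
  have "v = v \<^sub>v* (V * Vi)" using v VVi by simp
  also have "\<dots> = (c \<^sub>v* (U * M * V)) \<^sub>v* Vi" using mult_vec_mat_assoc[OF V Vi v] c(2) by simp
  also have "\<dots> = c \<^sub>v* (U * M * (V * Vi))"
    using mult_vec_mat_assoc[OF mult_carrier_mat[OF UM V] Vi c(1)] assoc_mult_mat[OF UM V Vi] by simp
  also have "\<dots> = (c \<^sub>v* U) \<^sub>v* M"
    using VVi UM mult_vec_mat_assoc[OF U M c(1)] right_mult_one_mat[OF UM] by simp
  finally have "v = (c \<^sub>v* U) \<^sub>v* M" .
  then show ?thesis unfolding row_lattice_iff using U M by (intro exI[of _ "c \<^sub>v* U"]) auto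
qed

lemma row_lattice_iff_smith_massager:
  assumes SW: "smith_massager M S W" and M: "M \<in> carrier_mat m m" and v: "dim_vec v = m"
  shows "v \<in> row_lattice M \<longleftrightarrow> v \<^sub>v* W \<in> row_lattice S"
proof -
  obtain Z where W: "W \<in> carrier_mat m m" and det: "det M \<noteq> 0" and SM: "is_smith_form_of S M"
    and MW: "cong_mod_mat (M * W) (0\<^sub>m m m) S"
    and Z: "Z \<in> carrier_mat m m" and ZW: "cong_mod_mat (Z * W) (1\<^sub>m m) S"
    using SW M unfolding smith_massager_def by auto
  note S = smith_form_of_nonsingular[OF SM M det]
  obtain U V where U: "unimodular m U" and V: "unimodular m V" and SUMV: "S = U * M * V"
    using SM M unfolding is_smith_form_of_def by auto
  have Uc: "U \<in> carrier_mat m m" and Vc: "V \<in> carrier_mat m m"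
    using U V unfolding unimodular_def by auto
  obtain Vi where Vi: "Vi \<in> carrier_mat m m" and VVi: "V * Vi = 1\<^sub>m m"
    using unimodular_right_inverse[OF V] by blast
  show ?thesis
  proof
    assume "v \<in> row_lattice M"
    then show "v \<^sub>v* W \<in> row_lattice S"
      by (rule mult_vec_mat_mem_row_lattice_of_mem[OF S(1,2) M W MW])
  next
    assume vW: "v \<^sub>v* W \<in> row_lattice S"
    define T where "T = Vi * W"
    have T: "T \<in> carrier_mat m m" unfolding T_def using Vi W by simp
    have VT: "V * T = W"
      unfolding T_def assoc_mult_mat[OF Vc Vi W, symmetric] VVi using W by simp
    have "S * T = U * M * (V * T)"
      unfolding SUMV by (rule assoc_mult_mat[OF mult_carrier_mat[OF Uc M] Vc T])
    also have "\<dots> = U * (M * W)" unfolding VT by (rule assoc_mult_mat[OF Uc M W])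
    finally have ST: "cong_mod_mat (S * T) (0\<^sub>m m m) S"
      using cong_mod_mat_zero_mult_left[OF S(1,2) Uc mult_carrier_mat[OF M W] MW] by simp
    have "Z * V * T = Z * W" unfolding assoc_mult_mat[OF Z Vc T] VT ..
    then have AT: "cong_mod_mat (Z * V * T) (1\<^sub>m m) S" using ZW by simp
    have "(v \<^sub>v* V) \<^sub>v* T = v \<^sub>v* W"
      unfolding mult_vec_mat_assoc[OF Vc T v, symmetric] VT ..
    then have "v \<^sub>v* V \<in> row_lattice S"
      using row_lattice_cancel_right[OF S T mult_carrier_mat[OF Z Vc] ST AT] vW Vc by simp
    then show "v \<in> row_lattice M"
      using mem_row_lattice_of_mult_right_invertible[OF M Uc Vc Vi VVi v] SUMV by simp
  qed
qed

lemma smith_massager_carrier_mat: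
  assumes "smith_massager M S W" and "M \<in> carrier_mat m m"
  shows "S \<in> carrier_mat m m" and "diagonal_mat S" and "W \<in> carrier_mat m m"
  using assms smith_form_of_nonsingular[of S M m] unfolding smith_massager_def by auto

lemma diff_mem_row_lattice_iff_colmod:
  assumes SW: "smith_massager M1 S W" and M1: "M1 \<in> carrier_mat m m"
    and M2: "M2 \<in> carrier_mat l2 m" and F: "F \<in> carrier_mat n m"
    and p: "dim_vec p = n" and b: "dim_vec b = l2"
  shows "p \<^sub>v* F - b \<^sub>v* M2 \<in> row_lattice M1 \<longleftrightarrow>
    p \<^sub>v* colmod (F * W) S - b \<^sub>v* colmod (M2 * W) S \<in> row_lattice S"
proof -
  note S = smith_massager_carrier_mat[OF SW M1]
  have FW: "F * W \<in> carrier_mat n m" and M2W: "M2 * W \<in> carrier_mat l2 m" using F M2 S(3) by auto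
  have "(p \<^sub>v* F - b \<^sub>v* M2) \<^sub>v* W = (p \<^sub>v* F) \<^sub>v* W - (b \<^sub>v* M2) \<^sub>v* W"
    using minus_mult_vec_mat[OF S(3)] F M2 by simp
  also have "\<dots> = p \<^sub>v* (F * W) - b \<^sub>v* (M2 * W)"
    using mult_vec_mat_assoc[OF F S(3) p] mult_vec_mat_assoc[OF M2 S(3) b] by simp
  finally have reduce: "(p \<^sub>v* F - b \<^sub>v* M2) \<^sub>v* W = p \<^sub>v* (F * W) - b \<^sub>v* (M2 * W)" .
  have colmod_p: "p \<^sub>v* colmod (F * W) S - p \<^sub>v* (F * W) \<in> row_lattice S"
    by (rule mult_vec_mat_cong_mod_mat[OF S(1,2) _ FW colmod_cong_mod_mat[OF S(1,2) FW] p])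
      (use FW in simp)
  have colmod_b: "b \<^sub>v* colmod (M2 * W) S - b \<^sub>v* (M2 * W) \<in> row_lattice S"
    by (rule mult_vec_mat_cong_mod_mat[OF S(1,2) _ M2W colmod_cong_mod_mat[OF S(1,2) M2W] b])
      (use M2W in simp)
  have "p \<^sub>v* F - b \<^sub>v* M2 \<in> row_lattice M1 \<longleftrightarrow> (p \<^sub>v* F - b \<^sub>v* M2) \<^sub>v* W \<in> row_lattice S"
    by (rule row_lattice_iff_smith_massager[OF SW M1]) (use M2 in simp)
  also have "\<dots> \<longleftrightarrow> p \<^sub>v* colmod (F * W) S - b \<^sub>v* colmod (M2 * W) S \<in> row_lattice S"
    unfolding reduce
    by (rule diff_mem_row_lattice_cong[symmetric, OF S(1,2) colmod_p colmod_b])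
      (use S(3) colmod_carrier_mat[OF FW] colmod_carrier_mat[OF M2W] in auto)
  finally show ?thesis .
qed

theorem mainTheorem5:
  fixes M1 M2 F S W :: "int mat" and m l2 n :: nat
  assumes "M1 \<in> carrier_mat m m" and "det M1 \<noteq> 0"
    and "M2 \<in> carrier_mat l2 m"
    and "F \<in> carrier_mat n m"
    and "smith_massager M1 S W"
  shows "relations_lattice (stack_mat M1 M2) F =
         relations_lattice (stack_mat S (colmod (M2 * W) S)) (colmod (F * W) S)"
proof -
  note M1 = assms(1) and M2 = assms(3) and F = assms(4) and SW = assms(5)
  note S = smith_massager_carrier_mat[OF SW M1]
  have M2W': "colmod (M2 * W) S \<in> carrier_mat l2 m" and FW': "colmod (F * W) S \<in> carrier_mat n m"
    using M2 F S(3) by auto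
  show ?thesis
    using relations_lattice_stack_mat_iff[OF M1 M2 F] relations_lattice_stack_mat_iff[OF S(1) M2W' FW']
      diff_mem_row_lattice_iff_colmod[OF SW M1 M2 F]
    by blast
qed

end
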